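(* Let $k\ge 3$, let $n$ be divisible by $3$, $\mathbf{X}\in\{0,1\}^{n/3\times n/3}$ and $\mu,\upsilon\in\{0,1\}^{n/3}$. Then the number of $k$-cliques in $\mathsf{G}_k^{\mu,\upsilon}(\mathbf{X})$ equals $K_3(G^{\mu,\upsilon}(\mathbf{X}))\cdot(n/3)^{k-3}$, where $K_3(\cdot)$ denotes the number of triangles.
   Context: $G^{\mu,\upsilon}(\mathbf{X})$ is the tripartite graph on vertex sets $U=\{u_1,\dots,u_{n/3}\}$, $Y=\{y_1,\dots,y_{n/3}\}$, $W=\{w_1,\dots,w_{n/3}\}$ whose edges are exactly: $\{u_i,y_j\}$ iff $\mathbf{X}_{i,j}=1$; $\{u_i,w_j\}$ for all $j$ iff $\mu_i=1$; $\{y_i,w_j\}$ for all $j$ iff $\upsilon_i=1$. $\mathsf{G}_k^{\mu,\upsilon}(\mathbf{X})$ has vertex set the disjoint union of $\mathsf{U}=\{\mathsf{u}_1,\dots,\mathsf{u}_{n/3}\}$, $\mathsf{Y}=\{\mathsf{y}_1,\dots,\mathsf{y}_{n/3}\}$ and $\mathsf{W}_p=\{\mathsf{w}_{p,1},\dots,\mathsf{w}_{p,n/3}\}$ for $1\le p\le k-2$, with edges exactly: $\{\mathsf{u}_i,\mathsf{y}_j\}$ iff $\mathbf{X}_{i,j}=1$; $\{\mathsf{u}_i,\mathsf{w}_{p,j}\}$ for all $p,j$ iff $\mu_i=1$; $\{\mathsf{y}_i,\mathsf{w}_{p,j}\}$ for all $p,j$ iff $\upsilon_i=1$; $\{\mathsf{w}_{p,i},\mathsf{w}_{q,j}\}$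 for all $i,j$ and $p\ne q$. A $k$-clique is a set of $k$ pairwise adjacent vertices. *)

theory Defs
  imports Main
begin

text \<open>Vertices are pairs (t, i) with a part tag t and an index i < m (0-based), m = n/3.
  Tripartite graph G: tag 0 = U, tag 1 = Y, tag 2 = W.
  Graph G_k: tag 0 = U, tag 1 = Y, tag p+1 = W_p for 1 \<le> p \<le> k-2 (tags 2..k-1).\<close>

definition G_V :: "nat \<Rightarrow> (nat \<times> nat) set" where
  "G_V m = {(t, i). t < 3 \<and> i < m}"

definition G_adj :: "(nat \<Rightarrow> nat \<Rightarrow> bool) \<Rightarrow> (nat \<Rightarrow> bool) \<Rightarrow> (nat \<Rightarrow> bool)
    \<Rightarrow> nat \<times> nat \<Rightarrow> nat \<times> nat \<Rightarrow> bool" where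
  "G_adj X mu ups a b \<longleftrightarrow>
     (fst a = 0 \<and> fst b = 1 \<and> X (snd a) (snd b)) \<or>
     (fst a = 1 \<and> fst b = 0 \<and> X (snd b) (snd a)) \<or>
     (fst a = 0 \<and> fst b = 2 \<and> mu (snd a)) \<or>
     (fst a = 2 \<and> fst b = 0 \<and> mu (snd b)) \<or>
     (fst a = 1 \<and> fst b = 2 \<and> ups (snd a)) \<or>
     (fst a = 2 \<and> fst b = 1 \<and> ups (snd b))"

definition Gk_V :: "nat \<Rightarrow> nat \<Rightarrow> (nat \<times> nat) set" where
  "Gk_V k m = {(t, i). t < k \<and> i < m}"

definition Gk_adj :: "(nat \<Rightarrow> nat \<Rightarrow> bool) \<Rightarrow> (nat \<Rightarrow> bool) \<Rightarrow> (nat \<Rightarrow> bool)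
    \<Rightarrow> nat \<times> nat \<Rightarrow> nat \<times> nat \<Rightarrow> bool" where
  "Gk_adj X mu ups a b \<longleftrightarrow>
     (fst a = 0 \<and> fst b = 1 \<and> X (snd a) (snd b)) \<or>
     (fst a = 1 \<and> fst b = 0 \<and> X (snd b) (snd a)) \<or>
     (fst a = 0 \<and> fst b \<ge> 2 \<and> mu (snd a)) \<or>
     (fst a \<ge> 2 \<and> fst b = 0 \<and> mu (snd b)) \<or>
     (fst a = 1 \<and> fst b \<ge> 2 \<and> ups (snd a)) \<or>
     (fst a \<ge> 2 \<and> fst b = 1 \<and> ups (snd b)) \<or>
     (fst a \<ge> 2 \<and> fst b \<ge> 2 \<and> fst a \<noteq> fst b)"

definition is_clique :: "('a \<Rightarrow> 'a \<Rightarrow> bool) \<Rightarrow> 'a set \<Rightarrow> 'a set \<Rightarrow> bool" where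
  "is_clique E V S \<longleftrightarrow> S \<subseteq> V \<and> (\<forall>x\<in>S. \<forall>y\<in>S. x \<noteq> y \<longrightarrow> E x y)"

definition num_cliques :: "('a \<Rightarrow> 'a \<Rightarrow> bool) \<Rightarrow> 'a set \<Rightarrow> nat \<Rightarrow> nat" where
  "num_cliques E V k = card {S. is_clique E V S \<and> card S = k}"

end

theory Submission
  imports Defs "HOL-Library.FuncSet"
begin

text \<open>Every part of G_k is an independent set, so a k-clique picks exactly one vertex from
  each of its k parts. The vertices chosen in U and Y must form an edge u_i y_j with
  mu_i = upsilon_j = 1, and then the vertices in W_1, ..., W_(k-2) can be chosen freely. Hence
  G_k has N * m^(k-2) cliques of size k, where N is the number of such edges and m = n/3.
  Since G_3 is G, the case k = 3 gives K_3(G) = N * m.\<close>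

lemma graph_eq_if_inj_on_fst:
  assumes "inj_on fst S"
  shows "S = (\<lambda>t. (t, snd (the_inv_into S fst t))) ` fst ` S"
proof -
  have "x = (fst x, snd (the_inv_into S fst (fst x)))" if "x \<in> S" for x
    using the_inv_into_f_f[OF assms that] by simp
  then show ?thesis
    by (auto simp: image_image intro: rev_image_eqI)
qed

lemma Gk_adj_imp_fst_neq: "Gk_adj X mu ups a b \<Longrightarrow> fst a \<noteq> fst b"
  unfolding Gk_adj_def by auto

lemma Gk_clique_eq_graph:
  assumes "is_clique (Gk_adj X mu ups) (Gk_V k m) S" and "card S = k"
  obtains h where "S = (\<lambda>t. (t, h t)) ` {..<k}" and "\<And>t. t < k \<Longrightarrow> h t < m"
proof -
  have inj: "inj_on fst S"
    using assms(1) Gk_adj_imp_fst_neq unfolding is_clique_def by (metis inj_onI)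
  have "fst ` S \<subseteq> {..<k}"
    using assms(1) by (auto simp: is_clique_def Gk_V_def)
  moreover have "card (fst ` S) = k"
    using card_image[OF inj] assms(2) by simp
  ultimately have parts: "fst ` S = {..<k}"
    by (simp add: card_subset_eq)
  define h where "h t = snd (the_inv_into S fst t)" for t
  have S: "S = (\<lambda>t. (t, h t)) ` {..<k}"
    using graph_eq_if_inj_on_fst[OF inj] unfolding parts h_def .
  moreover have "h t < m" if "t < k" for t
    using assms(1) that unfolding is_clique_def Gk_V_def S by auto
  ultimately show thesis using that by blast
qed

text \<open>The edges u_i y_j of G that lie in a triangle.\<close>
definition closable_edges :: "(nat \<Rightarrow> nat \<Rightarrow> bool) \<Rightarrow> (nat \<Rightarrow> bool) \<Rightarrow> (nat \<Rightarrow> bool)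
    \<Rightarrow> nat \<Rightarrow> (nat \<times> nat) set" where
  "closable_edges X mu ups m = {(i, j). i < m \<and> j < m \<and> X i j \<and> mu i \<and> ups j}"

definition clique_of :: "nat \<Rightarrow> (nat \<times> nat) \<times> (nat \<Rightarrow> nat) \<Rightarrow> (nat \<times> nat) set" where
  "clique_of k = (\<lambda>((i, j), g). insert (0, i) (insert (1, j) ((\<lambda>t. (t, g t)) ` {2..<k})))"

lemma mem_clique_of:
  "x \<in> clique_of k ((i, j), g) \<longleftrightarrow>
     x = (0, i) \<or> x = (1, j) \<or> (2 \<le> fst x \<and> fst x < k \<and> snd x = g (fst x))"
  unfolding clique_of_def by (cases x) auto

lemma inj_on_clique_of: "inj_on (clique_of k) (P \<times> ({2..<k} \<rightarrow>\<^sub>E B))"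
proof (rule inj_onI, safe)
  fix i j g i' j' g'
  assume g: "g \<in> {2..<k} \<rightarrow>\<^sub>E B" and g': "g' \<in> {2..<k} \<rightarrow>\<^sub>E B"
    and eq: "clique_of k ((i, j), g) = clique_of k ((i', j'), g')"
  have "(0, i) \<in> clique_of k ((i', j'), g')" "(1, j) \<in> clique_of k ((i', j'), g')"
    "\<And>t. t \<in> {2..<k} \<Longrightarrow> (t, g t) \<in> clique_of k ((i', j'), g')"
    by (simp_all flip: eq add: mem_clique_of)
  then have "i = i'" "j = j'" "\<And>t. t \<in> {2..<k} \<Longrightarrow> g t = g' t"
    by (auto simp: mem_clique_of)
  then show "i = i'" "j = j'" "g = g'"
    using PiE_ext[OF g g'] by blast+
qed

lemma Gk_clique_in_range_clique_of:
  assumes "k \<ge> 3" and "is_clique (Gk_adj X mu ups) (Gk_V k m) S" and "card S = k"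
  shows "S \<in> clique_of k ` (closable_edges X mu ups m \<times> ({2..<k} \<rightarrow>\<^sub>E {..<m}))"
proof -
  obtain h where S: "S = (\<lambda>t. (t, h t)) ` {..<k}" and h: "\<And>t. t < k \<Longrightarrow> h t < m"
    using Gk_clique_eq_graph[OF assms(2,3)] by blast
  have adj: "Gk_adj X mu ups (s, h s) (t, h t)" if "s < t" "t < k" for s t
    using assms(2) that unfolding is_clique_def S by auto
  have "X (h 0) (h 1)" "mu (h 0)" "ups (h 1)"
    using adj[of 0 1] adj[of 0 2] adj[of 1 2] assms(1) by (simp_all add: Gk_adj_def)
  then have "(h 0, h 1) \<in> closable_edges X mu ups m"
    using h assms(1) by (simp add: closable_edges_def)
  moreover have "restrict h {2..<k} \<in> {2..<k} \<rightarrow>\<^sub>E {..<m}"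
    using h by simp
  moreover have "{..<k} = {0, 1} \<union> {2..<k}"
    using assms(1) by auto
  then have "S = clique_of k ((h 0, h 1), restrict h {2..<k})"
    unfolding S clique_of_def by (auto simp: image_Un)
  ultimately show ?thesis by blast
qed

lemma clique_of_is_Gk_clique:
  assumes "(i, j) \<in> closable_edges X mu ups m" and "g \<in> {2..<k} \<rightarrow>\<^sub>E {..<m}" and "k \<ge> 2"
  shows "is_clique (Gk_adj X mu ups) (Gk_V k m) (clique_of k ((i, j), g))"
    and "card (clique_of k ((i, j), g)) = k"
proof -
  have ij: "X i j" "mu i" "ups j" "i < m" "j < m"
    using assms(1) by (auto simp: closable_edges_def)
  have "Gk_adj X mu ups (a, b) (c, d)"
    if "(a, b) \<in> clique_of k ((i, j), g)" "(c, d) \<in> clique_of k ((i, j), g)" "(a, b) \<noteq> (c, d)"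
    for a b c d
    using that ij unfolding mem_clique_of by (elim disjE) (auto simp: Gk_adj_def)
  moreover have "clique_of k ((i, j), g) \<subseteq> Gk_V k m"
    using ij assms(2,3) by (auto simp: mem_clique_of Gk_V_def subset_iff PiE_iff)
  ultimately show "is_clique (Gk_adj X mu ups) (Gk_V k m) (clique_of k ((i, j), g))"
    unfolding is_clique_def by fast
  have "card (clique_of k ((i, j), g)) = 2 + card ((\<lambda>t. (t, g t)) ` {2..<k})"
    by (auto simp: clique_of_def card_insert_if)
  also have "\<dots> = k"
    using assms(3) by (subst card_image) (auto simp: inj_on_def)
  finally show "card (clique_of k ((i, j), g)) = k" .
qed

lemma num_cliques_Gk:
  assumes "k \<ge> 3"
  shows "num_cliques (Gk_adj X mu ups) (Gk_V k m) k = card (closable_edges X mu ups m) * m ^ (k - 2)"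
proof -
  have "{S. is_clique (Gk_adj X mu ups) (Gk_V k m) S \<and> card S = k}
      = clique_of k ` (closable_edges X mu ups m \<times> ({2..<k} \<rightarrow>\<^sub>E {..<m}))"
    using Gk_clique_in_range_clique_of[OF assms] clique_of_is_Gk_clique assms
    by auto
  moreover have "finite (closable_edges X mu ups m)"
    by (rule finite_subset[of _ "{..<m} \<times> {..<m}"]) (auto simp: closable_edges_def)
  ultimately show ?thesis
    by (simp add: num_cliques_def card_image[OF inj_on_clique_of] card_cartesian_product card_PiE)
qed

lemma G_adj_eq_Gk_adj:
  assumes "fst a < 3" and "fst b < 3"
  shows "G_adj X mu ups a b = Gk_adj X mu ups a b"
proof -
  have "2 \<le> fst a \<longleftrightarrow> fst a = 2" "2 \<le> fst b \<longleftrightarrow> fst b = 2"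
    using assms by auto
  then show ?thesis
    unfolding G_adj_def Gk_adj_def by auto
qed

lemma num_triangles_G_eq_Gk:
  "num_cliques (G_adj X mu ups) (G_V m) 3 = num_cliques (Gk_adj X mu ups) (Gk_V 3 m) 3"
proof -
  have "is_clique (G_adj X mu ups) (G_V m) S = is_clique (Gk_adj X mu ups) (Gk_V 3 m) S" for S
    unfolding is_clique_def G_V_def Gk_V_def using G_adj_eq_Gk_adj
    by (smt (verit) case_prod_beta mem_Collect_eq subset_iff)
  then show ?thesis
    unfolding num_cliques_def by simp
qed

theorem lemma5:
  fixes k n :: nat and X :: "nat \<Rightarrow> nat \<Rightarrow> bool" and mu ups :: "nat \<Rightarrow> bool"
  assumes "k \<ge> 3" and "3 dvd n"
  shows "num_cliques (Gk_adj X mu ups) (Gk_V k (n div 3)) k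
         = num_cliques (G_adj X mu ups) (G_V (n div 3)) 3 * (n div 3) ^ (k - 3)"
proof -
  let ?m = "n div 3"
  have "num_cliques (G_adj X mu ups) (G_V ?m) 3 = card (closable_edges X mu ups ?m) * ?m"
    using num_cliques_Gk[of 3] num_triangles_G_eq_Gk by simp
  moreover have "k - 2 = Suc (k - 3)"
    using assms(1) by simp
  ultimately show ?thesis
    using num_cliques_Gk[OF assms(1)] by simp
qed

end
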